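(* Let $\mathcal{T}$ be a trim transducer with a single initial state. Then the (possibly infinite) multi-transducer $\bar{\mathcal{W}}(\mathcal{T})$ is separable, i.e. it has a single initial state and any two distinct transitions of $\bar{\mathcal{W}}(\mathcal{T})$ with the same source and the same input letter are transient (there is no run in $\bar{\mathcal{W}}(\mathcal{T})$ from the target of either of them back to their common source).
   Context: $\mathcal{T}=(Q,E,I,F,f)$ is a transducer: finite state set $Q$, initial states $I$, final states $F$, transitions $E\subseteq Q\times\Sigma\times\Gamma^*\times Q$, final output $f:F\to\Gamma^*$; trim means every state lies on a run from an initial to a final state. A multi-transducer is like a transducer except that the final output function maps final states to finite sets of words. Determinisation $\bar{\mathcal{D}}(\mathcal{T})$: its states are the finite subsets $U$ of $Q\times\Gamma^*$. For such $U$ and $\sigma\in\Sigma$, let $R_{U,\sigma}=\{(q,uv) : (p,u)\in U,\ (p,\sigma,v,q)\in E\}$, let $w_{U,\sigma}$ be the longest common prefix of the words $\{w : (q,w)\in R_{U,\sigma}\text{ for some }q\}$ (taken to be $\epsilon$ if this set is empty), and $P_{U,\sigma}=\{(q,w) : (q,w_{U,\sigma}w)\in R_{U,\sigma}\}$. The transitions of $\bar{\mathcal{D}}(\mathcal{T})$ are $(U,\sigma,w_{U,\sigma},P_{U,\sigma})$ for all $U,\sigma$; the initial state is $U_0=I\times\{\epsilon\}$; final states are the $U$ with $U\cap(F\times\Gamma^* )\neq\emptyset$, with final output set $\{wf(q) : q\in F,\ (q,w)\in U\}$. Rank: for a finite $U\subseteq Q\times\Gamma^*$, $n_U$ is the set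 of strongly connected components of $\mathcal{T}$ reachable (in $\mathcal{T}$) from the states $q$ such that $(q,w)\in U$ for some $w$. $\bar{\mathcal{W}}(\mathcal{T})$ is obtained from $\bar{\mathcal{D}}(\mathcal{T})$ as follows: every transition $(U,\sigma,v,U')$ of $\bar{\mathcal{D}}(\mathcal{T})$ with $n_{U'}\subsetneq n_U$ is removed and replaced by the transitions $(U,\sigma,vw,\{(q,\epsilon)\})$ for all $(q,w)\in U'$; other transitions, the initial state, final states and final outputs are unchanged. A transition is transient if there is no run from its target to its source. *)

theory Defs
  imports Main "HOL-Library.Sublist"
begin

text \<open>A transducer (Q, E, I, F, f). The input alphabet is the type 'a,
  the output alphabet the type 'b; output words are 'b lists.\<close>

record ('q, 'a, 'b) transducer =
  states :: "'q set"
  trans  :: "('q \<times> 'a \<times> 'b list \<times> 'q) set"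
  init   :: "'q set"
  final  :: "'q set"
  fout   :: "'q \<Rightarrow> 'b list"

definition wf_transducer :: "('q, 'a, 'b) transducer \<Rightarrow> bool" where
  "wf_transducer T \<longleftrightarrow> finite (states T) \<and> finite (trans T)
     \<and> trans T \<subseteq> states T \<times> UNIV \<times> UNIV \<times> states T
     \<and> init T \<subseteq> states T \<and> final T \<subseteq> states T"

definition edges :: "('s \<times> 'a \<times> 'w \<times> 's) set \<Rightarrow> ('s \<times> 's) set" where
  "edges E = {(p, q). \<exists>a v. (p, a, v, q) \<in> E}"

definition reach :: "('q, 'a, 'b) transducer \<Rightarrow> 'q \<Rightarrow> 'q \<Rightarrow> bool" where
  "reach T p q \<longleftrightarrow> (p, q) \<in> (edges (trans T))\<^sup>*"

definition trim :: "('q, 'a, 'b) transducer \<Rightarrow> bool" where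
  "trim T \<longleftrightarrow> (\<forall>q \<in> states T. \<exists>i \<in> init T. \<exists>f \<in> final T. reach T i q \<and> reach T q f)"

definition R_set :: "('q, 'a, 'b) transducer \<Rightarrow> ('q \<times> 'b list) set \<Rightarrow> 'a \<Rightarrow> ('q \<times> 'b list) set" where
  "R_set T U \<sigma> = {(q, u @ v) | p u v q. (p, u) \<in> U \<and> (p, \<sigma>, v, q) \<in> trans T}"

definition lcp :: "'b list set \<Rightarrow> 'b list" where
  "lcp S = (if S = {} then [] else Longest_common_prefix S)"

definition w_out :: "('q, 'a, 'b) transducer \<Rightarrow> ('q \<times> 'b list) set \<Rightarrow> 'a \<Rightarrow> 'b list" where
  "w_out T U \<sigma> = lcp (snd ` R_set T U \<sigma>)"

definition P_set :: "('q, 'a, 'b) transducer \<Rightarrow> ('q \<times> 'b list) set \<Rightarrow> 'a \<Rightarrow> ('q \<times> 'b list) set" where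
  "P_set T U \<sigma> = {(q, w). (q, w_out T U \<sigma> @ w) \<in> R_set T U \<sigma>}"

definition D_states :: "('q, 'a, 'b) transducer \<Rightarrow> ('q \<times> 'b list) set set" where
  "D_states T = {U. finite U \<and> U \<subseteq> states T \<times> UNIV}"

definition D_trans :: "('q, 'a, 'b) transducer
    \<Rightarrow> (('q \<times> 'b list) set \<times> 'a \<times> 'b list \<times> ('q \<times> 'b list) set) set" where
  "D_trans T = {(U, \<sigma>, w_out T U \<sigma>, P_set T U \<sigma>) | U \<sigma>. U \<in> D_states T}"

definition D_init :: "('q, 'a, 'b) transducer \<Rightarrow> ('q \<times> 'b list) set" where
  "D_init T = init T \<times> {[]}"

definition scc_of :: "('q, 'a, 'b) transducer \<Rightarrow> 'q \<Rightarrow> 'q set" where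
  "scc_of T q = {p. reach T q p \<and> reach T p q}"

definition rank :: "('q, 'a, 'b) transducer \<Rightarrow> ('q \<times> 'b list) set \<Rightarrow> 'q set set" where
  "rank T U = {scc_of T q' | q' q w. (q, w) \<in> U \<and> reach T q q'}"

text \<open>The multi-transducer W-bar: transitions and initial state
  (final states and outputs are those of D-bar and play no role below).\<close>

definition W_trans :: "('q, 'a, 'b) transducer
    \<Rightarrow> (('q \<times> 'b list) set \<times> 'a \<times> 'b list \<times> ('q \<times> 'b list) set) set" where
  "W_trans T =
     {(U, \<sigma>, v, U') | U \<sigma> v U'. (U, \<sigma>, v, U') \<in> D_trans T \<and> \<not> (rank T U' \<subset> rank T U)}
   \<union> {(U, \<sigma>, v @ w, {(q, [])}) | U \<sigma> v U' q w.
        (U, \<sigma>, v, U') \<in> D_trans T \<and> rank T U' \<subset> rank T U \<and> (q, w) \<in> U'}"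

definition W_init :: "('q, 'a, 'b) transducer \<Rightarrow> ('q \<times> 'b list) set set" where
  "W_init T = {D_init T}"

definition transient :: "('s \<times> 'a \<times> 'w \<times> 's) set \<Rightarrow> ('s \<times> 'a \<times> 'w \<times> 's) \<Rightarrow> bool" where
  "transient E t \<longleftrightarrow> (case t of (p, a, v, q) \<Rightarrow> (q, p) \<notin> (edges E)\<^sup>*)"

definition separable :: "'s set \<Rightarrow> ('s \<times> 'a \<times> 'w \<times> 's) set \<Rightarrow> bool" where
  "separable Init E \<longleftrightarrow> (\<exists>s. Init = {s}) \<and>
     (\<forall>t1 \<in> E. \<forall>t2 \<in> E. t1 \<noteq> t2 \<and> fst t1 = fst t2 \<and> fst (snd t1) = fst (snd t2)
        \<longrightarrow> transient E t1 \<and> transient E t2)"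

end

theory Submission
  imports Defs
begin

text \<open>Along every transition of the determinisation the rank can only shrink, and the
  replacement transitions of W-bar are exactly those where it shrinks strictly. Hence no run
  of W-bar leads back from the target of a replacement transition to its source. Two distinct
  W-bar transitions with equal source and letter come from the same (deterministic)
  D-bar transition, so this transition was replaced, and both are replacement transitions.\<close>

lemma D_trans_iff:
  "(U, \<sigma>, v, U') \<in> D_trans T \<longleftrightarrow> U \<in> D_states T \<and> v = w_out T U \<sigma> \<and> U' = P_set T U \<sigma>"
  unfolding D_trans_def by blast

lemma rank_P_set_subset: "rank T (P_set T U \<sigma>) \<subseteq> rank T U"
proof
  fix S assume "S \<in> rank T (P_set T U \<sigma>)"
  then obtain q' q w where S: "S = scc_of T q'" "(q, w) \<in> P_set T U \<sigma>" "reach T q q'"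
    unfolding rank_def by blast
  then obtain p u v where "(p, u) \<in> U" "(p, \<sigma>, v, q) \<in> trans T"
    unfolding P_set_def R_set_def by blast
  then have "reach T p q" unfolding reach_def edges_def by blast
  with S(3) have "reach T p q'" unfolding reach_def by (meson rtrancl_trans)
  with S(1) \<open>(p, u) \<in> U\<close> show "S \<in> rank T U" unfolding rank_def by blast
qed

lemma rank_singleton_subset: "(q, w) \<in> U \<Longrightarrow> rank T {(q, [])} \<subseteq> rank T U"
  unfolding rank_def by blast

lemma W_trans_cases [consumes 1]:
  assumes "(U, \<sigma>, v, U') \<in> W_trans T"
  obtains (kept) "U \<in> D_states T" "v = w_out T U \<sigma>" "U' = P_set T U \<sigma>"
      "\<not> rank T (P_set T U \<sigma>) \<subset> rank T U"
  | (replaced) q w where "U \<in> D_states T" "(q, w) \<in> P_set T U \<sigma>"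
      "v = w_out T U \<sigma> @ w" "U' = {(q, [])}" "rank T (P_set T U \<sigma>) \<subset> rank T U"
  using assms unfolding W_trans_def D_trans_iff by blast

lemma rank_W_trans_subset:
  assumes "(U, \<sigma>, v, U') \<in> W_trans T"
  shows "rank T U' \<subseteq> rank T U"
  using assms
proof (cases rule: W_trans_cases)
  case kept
  then show ?thesis using rank_P_set_subset by (simp only:)
next
  case (replaced q w)
  then have "rank T U' \<subseteq> rank T (P_set T U \<sigma>)" by (simp add: rank_singleton_subset)
  then show ?thesis using rank_P_set_subset by (rule order_trans)
qed

lemma rank_W_run_subset:
  assumes "(X, Y) \<in> (edges (W_trans T))\<^sup>*"
  shows "rank T Y \<subseteq> rank T X"
  using assms
proof (induction rule: rtrancl_induct)
  case base
  then show ?case by simp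
next
  case (step Y Z)
  then obtain a v where "(Y, a, v, Z) \<in> W_trans T" unfolding edges_def by blast
  from order_trans[OF rank_W_trans_subset[OF this] step.IH] show ?case .
qed

lemma W_trans_unique_if_not_shrinking:
  assumes "(U, \<sigma>, v, U') \<in> W_trans T" "\<not> rank T (P_set T U \<sigma>) \<subset> rank T U"
  shows "v = w_out T U \<sigma> \<and> U' = P_set T U \<sigma>"
  using assms(1)
proof (cases rule: W_trans_cases)
  case kept
  then show ?thesis by (simp only:)
next
  case (replaced q w)
  from assms(2) replaced(5) show ?thesis by (rule notE)
qed

lemma W_trans_transient_if_shrinking:
  assumes "(U, \<sigma>, v, U') \<in> W_trans T" "rank T (P_set T U \<sigma>) \<subset> rank T U"
  shows "transient (W_trans T) (U, \<sigma>, v, U')"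
  using assms(1)
proof (cases rule: W_trans_cases)
  case kept
  from kept(4) assms(2) show ?thesis by (rule notE)
next
  case (replaced q w)
  then have "rank T U' \<subseteq> rank T (P_set T U \<sigma>)" by (simp add: rank_singleton_subset)
  from this assms(2) have shrinks: "rank T U' \<subset> rank T U" by (rule subset_psubset_trans)
  have "(U', U) \<notin> (edges (W_trans T))\<^sup>*"
  proof
    assume "(U', U) \<in> (edges (W_trans T))\<^sup>*"
    then have "rank T U \<subseteq> rank T U'" by (rule rank_W_run_subset)
    with shrinks show False by blast
  qed
  then show ?thesis unfolding transient_def by simp
qed

theorem lemma6:
  fixes T :: "('q, 'a, 'b) transducer" and i :: 'q
  assumes "wf_transducer T"
    and "trim T"
    and "init T = {i}"
  shows "separable (W_init T) (W_trans T)"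
  unfolding separable_def
proof (intro conjI ballI impI)
  show "\<exists>s. W_init T = {s}" unfolding W_init_def by blast
next
  fix t1 t2 assume t1: "t1 \<in> W_trans T" and t2: "t2 \<in> W_trans T"
    and distinct: "t1 \<noteq> t2 \<and> fst t1 = fst t2 \<and> fst (snd t1) = fst (snd t2)"
  obtain U \<sigma> v1 U1 v2 U2 where t: "t1 = (U, \<sigma>, v1, U1)" "t2 = (U, \<sigma>, v2, U2)"
    using distinct by (cases t1, cases t2) auto
  have shrinking: "rank T (P_set T U \<sigma>) \<subset> rank T U"
  proof (rule ccontr)
    assume "\<not> rank T (P_set T U \<sigma>) \<subset> rank T U"
    then have "t1 = t2"
      using t t1 t2 W_trans_unique_if_not_shrinking by metis
    with distinct show False by simp
  qed
  show "transient (W_trans T) t1" "transient (W_trans T) t2"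
    using t t1 t2 W_trans_transient_if_shrinking[OF _ shrinking] by auto
qed

end
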